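(* In a strongly causal OPT, let $\rho\in\mathsf{St}_1(\mathrm{A})$ and $\mathcal C\in\mathsf{Tr}_1(\mathrm{A}\to\mathrm{A})$. (i) If every state of the theory has a purification, then $F(\rho,\mathcal C)=\inf_{\Phi\in P_\rho}F[\Phi,(\mathcal C\boxtimes\mathcal I)(\Phi)]^2$. (ii) If moreover the theory satisfies essential uniqueness of purification and atomicity of parallel composition of states, then $F(\rho,\mathcal C)=F[\Phi,(\mathcal C\boxtimes\mathcal I)(\Phi)]^2$ for every $\Phi\in P_\rho$.
   Context: Framework (operational probabilistic theory, OPT): each system $\mathrm{A}$ has states $\mathsf{St}(\mathrm{A})$ (normalized ones $\mathsf{St}_1(\mathrm{A})$), effects $\mathsf{Eff}(\mathrm{A})$, transformations $\mathsf{Tr}(\mathrm{A}\to\mathrm{B})$ (channels $\mathsf{Tr}_1$), sequential ($\circ$) and parallel ($\boxtimes$) composition, pairing $(a|\rho)$. Strong causality: for every test $\{\mathcal A_i\}$ and tests $\{\mathcal B^i_j\}_j$, $\{\mathcal B^i_j\circ\mathcal A_i\}$ is a test; unique deterministic effect $e_{\mathrm{A}}$. A state is pure if its only refinements (collections of states in a preparation test summing to it) are of the form $\lambda_i\rho$. A dilation of $\rho\in\mathsf{St}(\mathrm{A})$ is $\Psi\in\mathsf{St}(\mathrm{A}\mathrm{C})$ with $(\mathcal I_{\mathrm{A}}\boxtimes e_{\mathrm{C}})\Psi=\rho$; $D_\rho$ the set of dilations; a purification is a pure dilation; $P_\rho$ the set of purifications. Essential uniqueness of purification: for every $\rho$ with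 $P_\rho\ne\emptyset$ and all $\Phi,\Psi\in P_\rho\cap\mathsf{St}(\mathrm{A}\mathrm{B})$ there is a reversible $\mathcal U\in\mathsf{Tr}_1(\mathrm{B}\to\mathrm{B})$ with $\Psi=(\mathcal I_{\mathrm{A}}\boxtimes\mathcal U)\Phi$. Atomicity of parallel composition of states: $\phi\boxtimes\psi$ is pure whenever $\phi,\psi$ are pure. Fidelity: for $\rho,\sigma\in\mathsf{St}_1(\mathrm{A})$, $F(\rho,\sigma):=\inf_{\{a_i\}}\sum_i\sqrt{(a_i|\rho)(a_i|\sigma)}$, infimum over observation tests $\{a_i\}$ of $\mathrm{A}$. Correlation fidelity: $F(\rho,\mathcal C):=\inf_{\Psi\in D_\rho}F[\Psi,(\mathcal C\boxtimes\mathcal I)(\Psi)]^2$. *)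

theory Defs
  imports Complex_Main "HOL-Library.Multiset"
begin

text \<open>
Systems are finite lists of elementary systems: composition of systems is list
append and the trivial system I is the empty list (strict monoidal structure).
Events (transformations) live in a single carrier type 'e and are typed by
the set-valued map Ev A B = Tr(A -> B).  Tests are finite lists of events
(outcome-indexed).  cmp g f is the sequential composition g o f, tns f g the
parallel composition f (x) g, idt A the identity, swp A B the swap A B -> B A,
and prob assigns to every event of type I -> I its probability.
\<close>

record ('s, 'e) opt =
  Ev    :: "'s list \<Rightarrow> 's list \<Rightarrow> 'e set"
  Tests :: "'s list \<Rightarrow> 's list \<Rightarrow> 'e list set"
  cmp   :: "'e \<Rightarrow> 'e \<Rightarrow> 'e"
  tns   :: "'e \<Rightarrow> 'e \<Rightarrow> 'e"
  idt   :: "'s list \<Rightarrow> 'e"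
  swp   :: "'s list \<Rightarrow> 's list \<Rightarrow> 'e"
  prob  :: "'e \<Rightarrow> real"

definition St :: "('s,'e) opt \<Rightarrow> 's list \<Rightarrow> 'e set" where
  "St T A = Ev T [] A"

definition St1 :: "('s,'e) opt \<Rightarrow> 's list \<Rightarrow> 'e set" where
  "St1 T A = {\<rho>. [\<rho>] \<in> Tests T [] A}"

definition Eff :: "('s,'e) opt \<Rightarrow> 's list \<Rightarrow> 'e set" where
  "Eff T A = Ev T A []"

definition Tr1 :: "('s,'e) opt \<Rightarrow> 's list \<Rightarrow> 's list \<Rightarrow> 'e set" where
  "Tr1 T A B = {f. [f] \<in> Tests T A B}"

definition pair :: "('s,'e) opt \<Rightarrow> 'e \<Rightarrow> 'e \<Rightarrow> real" where
  "pair T a \<rho> = prob T (cmp T a \<rho>)"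

definition circ :: "('s,'e) opt \<Rightarrow> 's list \<Rightarrow> 'e \<Rightarrow> 'e \<Rightarrow> 'e \<Rightarrow> real" where
  "circ T E \<rho> b f = prob T (cmp T b (cmp T (tns T f (idt T E)) \<rho>))"

locale sc_opt =
  fixes T :: "('s,'e) opt"
  assumes tests_ev: "\<And>A B Ts. Ts \<in> Tests T A B \<Longrightarrow> Ts \<noteq> [] \<and> set Ts \<subseteq> Ev T A B"
    and ev_tests: "\<And>A B f. f \<in> Ev T A B \<Longrightarrow> \<exists>Ts\<in>Tests T A B. f \<in> set Ts"
    and cmp_ev: "\<And>A B C f g. f \<in> Ev T A B \<Longrightarrow> g \<in> Ev T B C \<Longrightarrow> cmp T g f \<in> Ev T A C"
    and tns_ev: "\<And>A B C D f g. f \<in> Ev T A B \<Longrightarrow> g \<in> Ev T C D \<Longrightarrow> tns T f g \<in> Ev T (A @ C) (B @ D)"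
    and idt_test: "\<And>A. [idt T A] \<in> Tests T A A"
    and swp_test: "\<And>A B. [swp T A B] \<in> Tests T (A @ B) (B @ A)"
    and par_tests: "\<And>A B C D T1 T2. T1 \<in> Tests T A B \<Longrightarrow> T2 \<in> Tests T C D \<Longrightarrow>
          concat (map (\<lambda>f. map (\<lambda>g. tns T f g) T2) T1) \<in> Tests T (A @ C) (B @ D)"
    and strong_causality: "\<And>A B C T1 Ts. T1 \<in> Tests T A B \<Longrightarrow> (\<forall>i<length T1. Ts i \<in> Tests T B C) \<Longrightarrow>
          concat (map (\<lambda>i. map (\<lambda>g. cmp T g (T1 ! i)) (Ts i)) [0..<length T1]) \<in> Tests T A C"
    and tests_perm: "\<And>A B T1 T2. T1 \<in> Tests T A B \<Longrightarrow> mset T2 = mset T1 \<Longrightarrow> T2 \<in> Tests T A B"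
    and coarse_graining: "\<And>A B f g xs. f # g # xs \<in> Tests T A B \<Longrightarrow>
          \<exists>h. h # xs \<in> Tests T A B \<and>
            (\<forall>E \<rho> b. \<rho> \<in> St T (A @ E) \<longrightarrow> b \<in> Eff T (B @ E) \<longrightarrow>
               circ T E \<rho> b h = circ T E \<rho> b f + circ T E \<rho> b g)"
    and extensionality: "\<And>A B f g. f \<in> Ev T A B \<Longrightarrow> g \<in> Ev T A B \<Longrightarrow>
          (\<forall>E \<rho> b. \<rho> \<in> St T (A @ E) \<longrightarrow> b \<in> Eff T (B @ E) \<longrightarrow> circ T E \<rho> b f = circ T E \<rho> b g)
          \<Longrightarrow> f = g"
    and cmp_assoc: "\<And>A B C D f g h. f \<in> Ev T A B \<Longrightarrow> g \<in> Ev T B C \<Longrightarrow> h \<in> Ev T C D \<Longrightarrow>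
          cmp T h (cmp T g f) = cmp T (cmp T h g) f"
    and cmp_idt: "\<And>A B f. f \<in> Ev T A B \<Longrightarrow> cmp T f (idt T A) = f \<and> cmp T (idt T B) f = f"
    and tns_assoc: "\<And>A B C D E F f g h. f \<in> Ev T A B \<Longrightarrow> g \<in> Ev T C D \<Longrightarrow> h \<in> Ev T E F \<Longrightarrow>
          tns T (tns T f g) h = tns T f (tns T g h)"
    and tns_unit: "\<And>A B f. f \<in> Ev T A B \<Longrightarrow> tns T f (idt T []) = f \<and> tns T (idt T []) f = f"
    and tns_idt: "\<And>A B. tns T (idt T A) (idt T B) = idt T (A @ B)"
    and interchange: "\<And>A B C D E F f f' g g'. f \<in> Ev T A B \<Longrightarrow> f' \<in> Ev T B C \<Longrightarrow>
          g \<in> Ev T D E \<Longrightarrow> g' \<in> Ev T E F \<Longrightarrow>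
          tns T (cmp T f' f) (cmp T g' g) = cmp T (tns T f' g') (tns T f g)"
    and swp_natural: "\<And>A B C D f g. f \<in> Ev T A B \<Longrightarrow> g \<in> Ev T C D \<Longrightarrow>
          cmp T (swp T B D) (tns T f g) = cmp T (tns T g f) (swp T A C)"
    and swp_sym: "\<And>A B. cmp T (swp T B A) (swp T A B) = idt T (A @ B)"
    and swp_unit: "\<And>A. swp T A [] = idt T A"
    and swp_hexagon: "\<And>A B C. swp T A (B @ C) =
          cmp T (tns T (idt T B) (swp T A C)) (tns T (swp T A B) (idt T C))"
    and prob_test: "\<And>Ts. Ts \<in> Tests T [] [] \<Longrightarrow>
          (\<forall>p\<in>set Ts. 0 \<le> prob T p) \<and> sum_list (map (prob T) Ts) = 1"
    and prob_cmp: "\<And>p q. p \<in> Ev T [] [] \<Longrightarrow> q \<in> Ev T [] [] \<Longrightarrow>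
          prob T (cmp T p q) = prob T p * prob T q"
    and prob_tns: "\<And>p q. p \<in> Ev T [] [] \<Longrightarrow> q \<in> Ev T [] [] \<Longrightarrow>
          prob T (tns T p q) = prob T p * prob T q"
    and unique_det_effect: "\<And>A. \<exists>!e. [e] \<in> Tests T A []"

definition deteff :: "('s,'e) opt \<Rightarrow> 's list \<Rightarrow> 'e" where
  "deteff T A = (THE e. [e] \<in> Tests T A [])"

text \<open>Pure state: every refinement (sub-collection of a preparation test summing
  to rho) consists of multiples lambda_i rho.\<close>
definition pure :: "('s,'e) opt \<Rightarrow> 's list \<Rightarrow> 'e \<Rightarrow> bool" where
  "pure T A \<rho> \<longleftrightarrow> \<rho> \<in> St T A \<and>
     (\<forall>Ts\<in>Tests T [] A. \<forall>S \<subseteq> {..<length Ts}.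
        (\<forall>a\<in>Eff T A. pair T a \<rho> = (\<Sum>i\<in>S. pair T a (Ts ! i))) \<longrightarrow>
        (\<forall>i\<in>S. \<exists>c\<ge>0. \<forall>a\<in>Eff T A. pair T a (Ts ! i) = c * pair T a \<rho>))"

definition dil :: "('s,'e) opt \<Rightarrow> 's list \<Rightarrow> 'e \<Rightarrow> ('s list \<times> 'e) set" where
  "dil T A \<rho> = {(C, \<Psi>). \<Psi> \<in> St T (A @ C) \<and> cmp T (tns T (idt T A) (deteff T C)) \<Psi> = \<rho>}"

definition purif :: "('s,'e) opt \<Rightarrow> 's list \<Rightarrow> 'e \<Rightarrow> ('s list \<times> 'e) set" where
  "purif T A \<rho> = {(C, \<Psi>) \<in> dil T A \<rho>. pure T (A @ C) \<Psi>}"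

definition fid :: "('s,'e) opt \<Rightarrow> 's list \<Rightarrow> 'e \<Rightarrow> 'e \<Rightarrow> real" where
  "fid T A \<rho> \<sigma> = (INF Ob\<in>Tests T A []. sum_list (map (\<lambda>a. sqrt (pair T a \<rho> * pair T a \<sigma>)) Ob))"

definition corr_fid :: "('s,'e) opt \<Rightarrow> 's list \<Rightarrow> 'e \<Rightarrow> 'e \<Rightarrow> real" where
  "corr_fid T A \<rho> Ch = (INF (B, \<Psi>)\<in>dil T A \<rho>. (fid T (A @ B) \<Psi> (cmp T (tns T Ch (idt T B)) \<Psi>))\<^sup>2)"

definition reversible :: "('s,'e) opt \<Rightarrow> 's list \<Rightarrow> 'e \<Rightarrow> bool" where
  "reversible T B U \<longleftrightarrow> U \<in> Tr1 T B B \<and>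
     (\<exists>V\<in>Tr1 T B B. cmp T V U = idt T B \<and> cmp T U V = idt T B)"

definition all_purifiable :: "('s,'e) opt \<Rightarrow> bool" where
  "all_purifiable T \<longleftrightarrow> (\<forall>A \<rho>. \<rho> \<in> St T A \<longrightarrow> purif T A \<rho> \<noteq> {})"

definition ess_unique_purif :: "('s,'e) opt \<Rightarrow> bool" where
  "ess_unique_purif T \<longleftrightarrow> (\<forall>A \<rho> B \<Phi> \<Psi>. \<rho> \<in> St T A \<longrightarrow>
      (B, \<Phi>) \<in> purif T A \<rho> \<longrightarrow> (B, \<Psi>) \<in> purif T A \<rho> \<longrightarrow>
      (\<exists>U. reversible T B U \<and> \<Psi> = cmp T (tns T (idt T A) U) \<Phi>))"

definition atomic_par :: "('s,'e) opt \<Rightarrow> bool" where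
  "atomic_par T \<longleftrightarrow> (\<forall>A B \<phi> \<psi>. pure T A \<phi> \<longrightarrow> pure T B \<psi> \<longrightarrow> pure T (A @ B) (tns T \<phi> \<psi>))"

end

theory Submission
  imports Defs
begin

text \<open>
  Discarding part of the ancilla is a local channel, and local channels on the ancilla commute with
  \<open>\<C> \<otimes> \<I>\<close>; by data processing they can only increase the fidelity between a dilation and its
  image. Every dilation is a marginal of one of its purifications, which purifies \<open>\<rho>\<close> as well, so
  the infimum over dilations is attained on purifications. For two purifications \<open>\<Phi>\<close>, \<open>\<Xi>\<close> of \<open>\<rho>\<close>,
  the products \<open>\<Phi> \<otimes> \<Xi>\<close> and \<open>\<Xi> \<otimes> \<Phi>\<close> are again purifications (atomicity), on the same ancilla
  up to a permutation, hence related by a reversible map on the ancilla (essential uniqueness),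
  which leaves the fidelity unchanged. Since \<open>\<Phi> \<otimes> \<Xi>\<close> arises from \<open>\<Phi>\<close> by appending \<open>\<Xi>\<close> and
  \<open>\<Xi>\<close> from \<open>\<Xi> \<otimes> \<Phi>\<close> by discarding, the value at \<open>\<Phi>\<close> is at most the value at \<open>\<Xi>\<close>, and by
  symmetry they are equal.
\<close>

definition inverse_channels :: "('s,'e) opt \<Rightarrow> 's list \<Rightarrow> 's list \<Rightarrow> 'e \<Rightarrow> 'e \<Rightarrow> bool" where
  "inverse_channels T X Y M N \<longleftrightarrow> [M] \<in> Tests T X Y \<and> [N] \<in> Tests T Y X \<and>
     cmp T N M = idt T X \<and> cmp T M N = idt T Y"

lemma member_le_sum_list_map:
  fixes f :: "'a \<Rightarrow> 'b::ordered_comm_monoid_add"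
  assumes "x \<in> set xs" and "\<And>y. y \<in> set xs \<Longrightarrow> 0 \<le> f y"
  shows "f x \<le> (\<Sum>y\<leftarrow>xs. f y)"
proof -
  have "0 \<le> (\<Sum>y\<leftarrow>remove1 x xs. f y)"
    using assms(2) set_remove1_subset by (intro sum_list_nonneg) fastforce
  then show ?thesis using sum_list_map_remove1[OF assms(1), of f] by (simp add: add_increasing2)
qed

context sc_opt begin

abbreviation on_ancilla :: "'s list \<Rightarrow> 'e \<Rightarrow> 'e \<Rightarrow> 'e" where
  "on_ancilla A M \<Psi> \<equiv> cmp T (tns T (idt T A) M) \<Psi>"

abbreviation ent_fid :: "'e \<Rightarrow> 's list \<Rightarrow> 's list \<Rightarrow> 'e \<Rightarrow> real" where
  "ent_fid Ch A B \<Psi> \<equiv> (fid T (A @ B) \<Psi> (cmp T (tns T Ch (idt T B)) \<Psi>))\<^sup>2"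

lemma single_test_ev: "[f] \<in> Tests T A B \<Longrightarrow> f \<in> Ev T A B"
  using tests_ev by fastforce

lemma idt_ev: "idt T A \<in> Ev T A A"
  using single_test_ev[OF idt_test] .

lemma idt_cmp_idt: "cmp T (idt T A) (idt T A) = idt T A"
  using cmp_idt[OF idt_ev] by blast

lemma deteff_test: "[deteff T A] \<in> Tests T A []"
  unfolding deteff_def by (rule theI', rule unique_det_effect)

lemma deteff_unique: "[e] \<in> Tests T A [] \<Longrightarrow> deteff T A = e"
  using unique_det_effect[of A] deteff_test[of A] by blast

lemma deteff_ev: "deteff T A \<in> Ev T A []"
  using single_test_ev[OF deteff_test] .

lemma cmp_single_test: "[f] \<in> Tests T A B \<Longrightarrow> [g] \<in> Tests T B C \<Longrightarrow> [cmp T g f] \<in> Tests T A C"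
  using strong_causality[where ?T1.0="[f]" and Ts="\<lambda>_. [g]"] by simp

lemma tns_single_test:
  "[f] \<in> Tests T A B \<Longrightarrow> [g] \<in> Tests T C D \<Longrightarrow> [tns T f g] \<in> Tests T (A @ C) (B @ D)"
  using par_tests[of "[f]" A B "[g]" C D] by simp

lemma test_after_channel:
  "Ob \<in> Tests T B C \<Longrightarrow> [f] \<in> Tests T A B \<Longrightarrow> map (\<lambda>a. cmp T a f) Ob \<in> Tests T A C"
  using strong_causality[where ?T1.0="[f]" and Ts="\<lambda>_. Ob"] by simp

lemma channel_after_test:
  assumes "Ts \<in> Tests T A B" and "[g] \<in> Tests T B C"
  shows "map (cmp T g) Ts \<in> Tests T A C"
proof -
  have "concat (map (\<lambda>i. map (\<lambda>g'. cmp T g' (Ts ! i)) [g]) [0..<length Ts]) \<in> Tests T A C"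
    using strong_causality[OF assms(1), of "\<lambda>_. [g]"] assms(2) by simp
  moreover have "concat (map (\<lambda>i. map (\<lambda>g'. cmp T g' (Ts ! i)) [g]) [0..<length Ts]) = map (cmp T g) Ts"
    by (rule nth_equalityI) (auto simp: concat_map_singleton)
  ultimately show ?thesis by simp
qed

lemma on_ancilla_single_test: "[M] \<in> Tests T B C \<Longrightarrow> [tns T (idt T A) M] \<in> Tests T (A @ B) (A @ C)"
  using tns_single_test[OF idt_test] .

lemma on_ancilla_ev: "M \<in> Ev T B C \<Longrightarrow> tns T (idt T A) M \<in> Ev T (A @ B) (A @ C)"
  using tns_ev[OF idt_ev] .

lemma tns_idt_assoc: "f \<in> Ev T X Y \<Longrightarrow> tns T (idt T A) (tns T (idt T B) f) = tns T (idt T (A @ B)) f"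
  using tns_assoc[OF idt_ev idt_ev, of f X Y A B] tns_idt by simp

lemma on_ancilla_cmp:
  "M \<in> Ev T X Y \<Longrightarrow> N \<in> Ev T Y Z \<Longrightarrow>
    tns T (idt T A) (cmp T N M) = cmp T (tns T (idt T A) N) (tns T (idt T A) M)"
  using interchange[OF idt_ev idt_ev, of M X Y N Z A] idt_cmp_idt by simp

lemma on_ancilla_state:
  assumes "X \<in> Ev T [] P" and "Y \<in> Ev T [] Q"
  shows "on_ancilla P Y X = tns T X Y"
  using interchange[OF assms(1) idt_ev idt_ev assms(2)] cmp_idt assms tns_unit[OF assms(1)] by simp

lemma tns_scalar_eq_cmp:
  assumes "p \<in> Ev T [] []" and "g \<in> Ev T E []"
  shows "tns T p g = cmp T p g"
  using interchange[OF idt_ev assms idt_ev] cmp_idt assms tns_unit by simp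

lemma prob_nonneg: "p \<in> Ev T [] [] \<Longrightarrow> 0 \<le> prob T p"
  using ev_tests prob_test by blast

lemma deteff_nil: "deteff T [] = idt T []"
  by (rule deteff_unique[OF idt_test])

lemma prob_idt: "prob T (idt T []) = 1"
  using prob_test[OF idt_test[of "[]"]] by simp

lemma single_test_scalar: "[p] \<in> Tests T [] [] \<Longrightarrow> p = idt T []"
  using deteff_unique[of p "[]"] deteff_nil by simp

lemma deteff_append: "deteff T (B @ C) = tns T (deteff T B) (deteff T C)"
  using deteff_unique tns_single_test[OF deteff_test deteff_test, of B C] by simp

lemma deteff_append_cmp: "deteff T (B @ C) = cmp T (deteff T B) (tns T (idt T B) (deteff T C))"
  using deteff_unique[OF cmp_single_test[OF tns_single_test[OF idt_test deteff_test] deteff_test]]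
  by simp

lemma pair_cmp: "a \<in> Ev T Y [] \<Longrightarrow> F \<in> Ev T X Y \<Longrightarrow> s \<in> Ev T [] X \<Longrightarrow>
   pair T (cmp T a F) s = pair T a (cmp T F s)"
  unfolding pair_def using cmp_assoc[of s "[]" X F Y a "[]"] by simp

lemma pair_nonneg: "a \<in> Ev T X [] \<Longrightarrow> s \<in> Ev T [] X \<Longrightarrow> 0 \<le> pair T a s"
  unfolding pair_def using prob_nonneg[OF cmp_ev] by blast

lemma coarse_graining_list:
  "ys \<noteq> [] \<Longrightarrow> ys @ xs \<in> Tests T A B \<Longrightarrow> \<exists>h. h # xs \<in> Tests T A B \<and>
     (\<forall>E \<rho> b. \<rho> \<in> St T (A @ E) \<longrightarrow> b \<in> Eff T (B @ E) \<longrightarrow>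
        circ T E \<rho> b h = (\<Sum>f\<leftarrow>ys. circ T E \<rho> b f))"
proof (induction ys arbitrary: xs)
  case Nil
  then show ?case by simp
next
  case (Cons f ys)
  show ?case
  proof (cases "ys = []")
    case True
    then show ?thesis using Cons.prems by auto
  next
    case False
    have "ys @ f # xs \<in> Tests T A B"
      using tests_perm[OF Cons.prems(2)] by simp
    from Cons.IH[OF False this] obtain h1 where h1: "h1 # f # xs \<in> Tests T A B"
      "\<forall>E \<rho> b. \<rho> \<in> St T (A @ E) \<longrightarrow> b \<in> Eff T (B @ E) \<longrightarrow>
        circ T E \<rho> b h1 = (\<Sum>f\<leftarrow>ys. circ T E \<rho> b f)" by blast
    from coarse_graining[OF h1(1)] obtain h where "h # xs \<in> Tests T A B"
      "\<forall>E \<rho> b. \<rho> \<in> St T (A @ E) \<longrightarrow> b \<in> Eff T (B @ E) \<longrightarrow>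
               circ T E \<rho> b h = circ T E \<rho> b h1 + circ T E \<rho> b f" by blast
    with h1(2) show ?thesis by (intro exI[of _ h]) auto
  qed
qed

lemma circ_trivial_ancilla:
  assumes "h \<in> Ev T X []" and "s \<in> Ev T [] X"
  shows "circ T [] s (idt T []) h = pair T h s"
  unfolding circ_def pair_def using tns_unit[OF assms(1)] cmp_idt[OF cmp_ev[OF assms(2,1)]] by simp

lemma pair_deteff_sum_test:
  assumes Ob: "Ob \<in> Tests T X []" and s: "s \<in> St T X"
  shows "pair T (deteff T X) s = (\<Sum>a\<leftarrow>Ob. pair T a s)"
proof -
  have "Ob \<noteq> []" and Ob_ev: "set Ob \<subseteq> Ev T X []"
    using tests_ev Ob by auto
  with Ob obtain h where h: "[h] \<in> Tests T X []"
    and circ_h: "\<forall>E \<rho> b. \<rho> \<in> St T (X @ E) \<longrightarrow> b \<in> Eff T E \<longrightarrow>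
        circ T E \<rho> b h = (\<Sum>f\<leftarrow>Ob. circ T E \<rho> b f)"
    using coarse_graining_list[of Ob "[]" X "[]"] by auto
  have s_ev: "s \<in> Ev T [] X" using s unfolding St_def .
  have "pair T h s = (\<Sum>f\<leftarrow>Ob. circ T [] s (idt T []) f)"
    using circ_h s idt_ev[of "[]"] circ_trivial_ancilla[OF single_test_ev[OF h] s_ev]
    unfolding Eff_def by auto
  also have "\<dots> = (\<Sum>a\<leftarrow>Ob. pair T a s)"
    using Ob_ev circ_trivial_ancilla[OF _ s_ev] by (intro arg_cong[where f=sum_list] map_cong) auto
  finally show ?thesis using deteff_unique[OF h] by simp
qed

lemma pair_le_deteff:
  assumes b: "b \<in> Eff T X" and s: "s \<in> St T X"
  shows "pair T b s \<le> pair T (deteff T X) s"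
proof -
  obtain Ob where Ob: "Ob \<in> Tests T X []" "b \<in> set Ob"
    using ev_tests b unfolding Eff_def by blast
  have "\<And>a. a \<in> set Ob \<Longrightarrow> 0 \<le> pair T a s"
    using Ob(1) tests_ev pair_nonneg s unfolding St_def by blast
  then show ?thesis
    using member_le_sum_list_map[OF Ob(2), of "\<lambda>a. pair T a s"] pair_deteff_sum_test[OF Ob(1) s]
    by simp
qed

lemma pair_deteff_tns_idt:
  assumes y: "y \<in> Ev T [] X" and \<tau>: "\<tau> \<in> Ev T [] E"
  shows "pair T (deteff T (X @ E)) (cmp T (tns T y (idt T E)) \<tau>)
    = pair T (deteff T X) y * pair T (deteff T E) \<tau>"
proof -
  have y_idt: "tns T y (idt T E) \<in> Ev T E (X @ E)" using tns_ev[OF y idt_ev] by simp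
  have p: "cmp T (deteff T X) y \<in> Ev T [] []" using cmp_ev[OF y deteff_ev] .
  have "cmp T (deteff T (X @ E)) (cmp T (tns T y (idt T E)) \<tau>)
      = cmp T (cmp T (tns T (deteff T X) (deteff T E)) (tns T y (idt T E))) \<tau>"
    unfolding deteff_append using cmp_assoc[OF \<tau> y_idt tns_ev[OF deteff_ev deteff_ev]] by simp
  also have "\<dots> = cmp T (tns T (cmp T (deteff T X) y) (deteff T E)) \<tau>"
    using interchange[OF y deteff_ev idt_ev deteff_ev] cmp_idt[OF deteff_ev] by simp
  also have "\<dots> = cmp T (cmp T (deteff T X) y) (cmp T (deteff T E) \<tau>)"
    using tns_scalar_eq_cmp[OF p deteff_ev] cmp_assoc[OF \<tau> deteff_ev p] by simp
  finally show ?thesis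
    unfolding pair_def using prob_cmp[OF p cmp_ev[OF \<tau> deteff_ev]] by simp
qed

lemma circ_zero_norm:
  assumes y: "y \<in> Ev T [] X" and y0: "pair T (deteff T X) y = 0"
    and \<tau>: "\<tau> \<in> St T E" and b: "b \<in> Eff T (X @ E)"
  shows "circ T E \<tau> b y = 0"
proof -
  have \<tau>_ev: "\<tau> \<in> Ev T [] E" using \<tau> unfolding St_def .
  define s where "s = cmp T (tns T y (idt T E)) \<tau>"
  have "tns T y (idt T E) \<in> Ev T E (X @ E)" using tns_ev[OF y idt_ev] by simp
  then have s: "s \<in> St T (X @ E)" unfolding s_def St_def using cmp_ev[OF \<tau>_ev] by blast
  have "0 \<le> pair T b s" using pair_nonneg b s unfolding Eff_def St_def by blast
  moreover have "pair T b s \<le> 0"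
    using pair_le_deteff[OF b s] pair_deteff_tns_idt[OF y \<tau>_ev] y0 unfolding s_def by simp
  ultimately show ?thesis unfolding circ_def s_def pair_def by simp
qed

text \<open>Coarse-graining \<open>\<sigma>\<close> with the other outcomes of a test containing it reproduces \<open>\<sigma>\<close>,
  because normalisation forces those outcomes to have norm zero.\<close>

lemma normalised_state_single_test:
  assumes \<sigma>: "\<sigma> \<in> St T X" and norm: "cmp T (deteff T X) \<sigma> = idt T []"
  shows "[\<sigma>] \<in> Tests T [] X"
proof -
  have \<sigma>_ev: "\<sigma> \<in> Ev T [] X" using \<sigma> unfolding St_def .
  obtain Ts where Ts: "Ts \<in> Tests T [] X" "\<sigma> \<in> set Ts" using ev_tests[OF \<sigma>_ev] by blast
  define rest where "rest = remove1 \<sigma> Ts"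
  have "set Ts \<subseteq> Ev T [] X" using tests_ev[OF Ts(1)] by simp
  then have rest_ev: "set rest \<subseteq> Ev T [] X"
    unfolding rest_def using set_remove1_subset by (rule order_trans[rotated])
  have "(\<Sum>y\<leftarrow>Ts. pair T (deteff T X) y) = 1"
    using prob_test[OF channel_after_test[OF Ts(1) deteff_test]] unfolding pair_def by (simp add: comp_def)
  then have "(\<Sum>y\<leftarrow>rest. pair T (deteff T X) y) = 0"
    using sum_list_map_remove1[OF Ts(2), of "pair T (deteff T X)"] norm prob_idt
    unfolding rest_def pair_def by simp
  moreover have "\<And>y. y \<in> set rest \<Longrightarrow> 0 \<le> pair T (deteff T X) y"
    using rest_ev pair_nonneg[OF deteff_ev] by blast
  ultimately have rest0: "\<And>y. y \<in> set rest \<Longrightarrow> pair T (deteff T X) y = 0"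
    using sum_list_nonneg_eq_0_iff[of "map (pair T (deteff T X)) rest"] by (simp add: comp_def) blast
  have "(\<sigma> # rest) @ [] \<in> Tests T [] X"
    using tests_perm[OF Ts(1)] Ts(2) unfolding rest_def by simp
  then obtain h where h: "[h] \<in> Tests T [] X"
    and circ_h: "\<forall>E \<rho> b. \<rho> \<in> St T ([] @ E) \<longrightarrow> b \<in> Eff T (X @ E) \<longrightarrow>
        circ T E \<rho> b h = (\<Sum>f\<leftarrow>\<sigma> # rest. circ T E \<rho> b f)"
    using coarse_graining_list[of "\<sigma> # rest" "[]"] by blast
  have "h = \<sigma>"
  proof (rule extensionality[OF single_test_ev[OF h] \<sigma>_ev], intro allI impI)
    fix E \<tau> b assume \<tau>: "\<tau> \<in> St T ([] @ E)" and b: "b \<in> Eff T (X @ E)"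
    have "\<forall>y\<in>set rest. circ T E \<tau> b y = 0"
      using circ_zero_norm rest0 rest_ev \<tau> b by auto
    then have "(\<Sum>f\<leftarrow>rest. circ T E \<tau> b f) = 0"
      by (metis map_cong sum_list_0)
    then show "circ T E \<tau> b h = circ T E \<tau> b \<sigma>"
      using circ_h \<tau> b by simp
  qed
  with h show ?thesis by simp
qed

lemma fid_sum_nonneg:
  assumes "Ob \<in> Tests T X []" and "\<rho> \<in> St T X" and "\<sigma> \<in> St T X"
  shows "0 \<le> (\<Sum>a\<leftarrow>Ob. sqrt (pair T a \<rho> * pair T a \<sigma>))"
  using tests_ev[OF assms(1)] assms(2,3) pair_nonneg unfolding St_def
  by (intro sum_list_nonneg) auto

lemma fid_le_test:
  assumes "Ob \<in> Tests T X []" and "\<rho> \<in> St T X" and "\<sigma> \<in> St T X"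
  shows "fid T X \<rho> \<sigma> \<le> (\<Sum>a\<leftarrow>Ob. sqrt (pair T a \<rho> * pair T a \<sigma>))"
  unfolding fid_def
  by (rule cINF_lower[OF bdd_belowI2 assms(1)]) (rule fid_sum_nonneg[OF _ assms(2,3)])

lemma fid_greatest:
  assumes "\<And>Ob. Ob \<in> Tests T X [] \<Longrightarrow> c \<le> (\<Sum>a\<leftarrow>Ob. sqrt (pair T a \<rho> * pair T a \<sigma>))"
  shows "c \<le> fid T X \<rho> \<sigma>"
  unfolding fid_def using deteff_test assms by (intro cINF_greatest) auto

lemma fid_nonneg: "\<rho> \<in> St T X \<Longrightarrow> \<sigma> \<in> St T X \<Longrightarrow> 0 \<le> fid T X \<rho> \<sigma>"
  by (rule fid_greatest) (rule fid_sum_nonneg)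

text \<open>Data processing: a test after the channel is a test before it.\<close>

lemma fid_le_fid_channel:
  assumes M: "[M] \<in> Tests T X Y" and \<rho>: "\<rho> \<in> St T X" and \<sigma>: "\<sigma> \<in> St T X"
  shows "fid T X \<rho> \<sigma> \<le> fid T Y (cmp T M \<rho>) (cmp T M \<sigma>)"
proof (rule fid_greatest)
  fix Ob assume Ob: "Ob \<in> Tests T Y []"
  have M_ev: "M \<in> Ev T X Y" using single_test_ev[OF M] .
  have "fid T X \<rho> \<sigma> \<le> (\<Sum>a\<leftarrow>map (\<lambda>a. cmp T a M) Ob. sqrt (pair T a \<rho> * pair T a \<sigma>))"
    using fid_le_test[OF test_after_channel[OF Ob M] \<rho> \<sigma>] .
  also have "\<dots> = (\<Sum>a\<leftarrow>Ob. sqrt (pair T a (cmp T M \<rho>) * pair T a (cmp T M \<sigma>)))"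
  proof (simp only: map_map comp_def, intro arg_cong[where f=sum_list] map_cong refl)
    fix a assume "a \<in> set Ob"
    then have "a \<in> Ev T Y []" using tests_ev[OF Ob] by blast
    then show "sqrt (pair T (cmp T a M) \<rho> * pair T (cmp T a M) \<sigma>)
        = sqrt (pair T a (cmp T M \<rho>) * pair T a (cmp T M \<sigma>))"
      using pair_cmp[OF _ M_ev] \<rho> \<sigma> unfolding St_def by simp
  qed
  finally show "fid T X \<rho> \<sigma> \<le> (\<Sum>a\<leftarrow>Ob. sqrt (pair T a (cmp T M \<rho>) * pair T a (cmp T M \<sigma>)))" .
qed

lemma on_ancilla_commute:
  assumes Ch: "Ch \<in> Ev T A A" and M: "M \<in> Ev T B C"
  shows "cmp T (tns T (idt T A) M) (tns T Ch (idt T B)) = cmp T (tns T Ch (idt T C)) (tns T (idt T A) M)"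
  using interchange[OF Ch idt_ev idt_ev M] interchange[OF idt_ev Ch M idt_ev] cmp_idt[OF Ch] cmp_idt[OF M]
  by simp

lemma ent_fid_on_ancilla_le:
  assumes \<Psi>: "\<Psi> \<in> St T (A @ B)" and M: "[M] \<in> Tests T B C" and Ch: "Ch \<in> Ev T A A"
  shows "ent_fid Ch A B \<Psi> \<le> ent_fid Ch A C (on_ancilla A M \<Psi>)"
proof -
  have \<Psi>_ev: "\<Psi> \<in> Ev T [] (A @ B)" using \<Psi> unfolding St_def .
  have M_ev: "M \<in> Ev T B C" using single_test_ev[OF M] .
  have Ch_B: "tns T Ch (idt T B) \<in> Ev T (A @ B) (A @ B)" using tns_ev[OF Ch idt_ev] .
  have Ch\<Psi>: "cmp T (tns T Ch (idt T B)) \<Psi> \<in> St T (A @ B)"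
    unfolding St_def using cmp_ev[OF \<Psi>_ev Ch_B] .
  have "on_ancilla A M (cmp T (tns T Ch (idt T B)) \<Psi>) = cmp T (tns T Ch (idt T C)) (on_ancilla A M \<Psi>)"
    using cmp_assoc[OF \<Psi>_ev Ch_B on_ancilla_ev[OF M_ev]] on_ancilla_commute[OF Ch M_ev]
      cmp_assoc[OF \<Psi>_ev on_ancilla_ev[OF M_ev] tns_ev[OF Ch idt_ev]] by simp
  then have "fid T (A @ B) \<Psi> (cmp T (tns T Ch (idt T B)) \<Psi>)
      \<le> fid T (A @ C) (on_ancilla A M \<Psi>) (cmp T (tns T Ch (idt T C)) (on_ancilla A M \<Psi>))"
    using fid_le_fid_channel[OF on_ancilla_single_test[OF M] \<Psi> Ch\<Psi>] by simp
  then show ?thesis using fid_nonneg[OF \<Psi> Ch\<Psi>] by (rule power_mono)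
qed

lemma inverse_channels_idt: "inverse_channels T X X (idt T X) (idt T X)"
  unfolding inverse_channels_def using idt_test idt_cmp_idt by simp

lemma inverse_channels_swp: "inverse_channels T (A @ B) (B @ A) (swp T A B) (swp T B A)"
  unfolding inverse_channels_def using swp_test swp_sym by simp

lemma inverse_channels_cmp:
  assumes "inverse_channels T X Y M N" and "inverse_channels T Y Z M' N'"
  shows "inverse_channels T X Z (cmp T M' M) (cmp T N N')"
proof -
  have M: "[M] \<in> Tests T X Y" "[N] \<in> Tests T Y X" "cmp T N M = idt T X" "cmp T M N = idt T Y"
    and M': "[M'] \<in> Tests T Y Z" "[N'] \<in> Tests T Z Y" "cmp T N' M' = idt T Y" "cmp T M' N' = idt T Z"
    using assms unfolding inverse_channels_def by auto
  have ev: "M \<in> Ev T X Y" "N \<in> Ev T Y X" "M' \<in> Ev T Y Z" "N' \<in> Ev T Z Y"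
    using single_test_ev M M' by auto
  have "cmp T (cmp T N N') (cmp T M' M) = cmp T N (cmp T (cmp T N' M') M)"
    using cmp_assoc[OF ev(1) ev(3) ev(4)] cmp_assoc[OF cmp_ev[OF ev(1,3)] ev(4) ev(2)] by simp
  moreover have "cmp T (cmp T M' M) (cmp T N N') = cmp T M' (cmp T (cmp T M N) N')"
    using cmp_assoc[OF ev(4) ev(2) ev(1)] cmp_assoc[OF cmp_ev[OF ev(4,2)] ev(1) ev(3)] by simp
  ultimately show ?thesis
    unfolding inverse_channels_def using M M' cmp_single_test cmp_idt ev by simp
qed

lemma inverse_channels_tns:
  assumes "inverse_channels T X Y M N" and "inverse_channels T X' Y' M' N'"
  shows "inverse_channels T (X @ X') (Y @ Y') (tns T M M') (tns T N N')"
proof -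
  have M: "[M] \<in> Tests T X Y" "[N] \<in> Tests T Y X" "cmp T N M = idt T X" "cmp T M N = idt T Y"
    and M': "[M'] \<in> Tests T X' Y'" "[N'] \<in> Tests T Y' X'" "cmp T N' M' = idt T X'" "cmp T M' N' = idt T Y'"
    using assms unfolding inverse_channels_def by auto
  have ev: "M \<in> Ev T X Y" "N \<in> Ev T Y X" "M' \<in> Ev T X' Y'" "N' \<in> Ev T Y' X'"
    using single_test_ev M M' by auto
  show ?thesis
    unfolding inverse_channels_def
    using M M' tns_single_test interchange[OF ev(1,2,3,4)] interchange[OF ev(2,1,4,3)] tns_idt by simp
qed

lemma inverse_channels_rotate: "\<exists>M N. inverse_channels T (Z @ X @ Y) (Y @ X @ Z) M N"
  using inverse_channels_cmp[OF inverse_channels_swp[of Z "X @ Y"]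
      inverse_channels_tns[OF inverse_channels_swp[of X Y] inverse_channels_idt[of Z]]]
  by auto

lemma reversible_inverse_channels: "reversible T B U \<Longrightarrow> \<exists>V. inverse_channels T B B U V"
  unfolding reversible_def inverse_channels_def Tr1_def by auto

lemma cmp_inverse_channels:
  assumes "inverse_channels T X Y M N" and \<Phi>: "\<Phi> \<in> Ev T [] X"
  shows "cmp T N (cmp T M \<Phi>) = \<Phi>"
proof -
  have "M \<in> Ev T X Y" "N \<in> Ev T Y X" "cmp T N M = idt T X"
    using assms(1) single_test_ev unfolding inverse_channels_def by auto
  then show ?thesis using cmp_assoc[OF \<Phi>] cmp_idt[OF \<Phi>] by simp
qed

lemma inverse_channels_on_ancilla:
  "inverse_channels T X Y M N \<Longrightarrow>
    inverse_channels T (A @ X) (A @ Y) (tns T (idt T A) M) (tns T (idt T A) N)"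
  using inverse_channels_tns[OF inverse_channels_idt] .

lemma ent_fid_on_ancilla_inverse:
  assumes MN: "inverse_channels T X Y M N" and \<Phi>: "\<Phi> \<in> St T (A @ X)" and Ch: "Ch \<in> Ev T A A"
  shows "ent_fid Ch A Y (on_ancilla A M \<Phi>) = ent_fid Ch A X \<Phi>"
proof -
  have M: "[M] \<in> Tests T X Y" and N: "[N] \<in> Tests T Y X"
    using MN unfolding inverse_channels_def by auto
  have M\<Phi>: "on_ancilla A M \<Phi> \<in> St T (A @ Y)"
    using \<Phi> cmp_ev on_ancilla_ev[OF single_test_ev[OF M]] unfolding St_def by blast
  have "on_ancilla A N (on_ancilla A M \<Phi>) = \<Phi>"
    using cmp_inverse_channels[OF inverse_channels_on_ancilla[OF MN]] \<Phi> unfolding St_def by blast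
  then show ?thesis
    using ent_fid_on_ancilla_le[OF \<Phi> M Ch] ent_fid_on_ancilla_le[OF M\<Phi> N Ch] by simp
qed

lemma pair_cmp_inverse_channels:
  assumes MN: "inverse_channels T X Y M N" and a: "a \<in> Ev T X []" and t: "t \<in> Ev T [] X"
  shows "pair T a t = pair T (cmp T a N) (cmp T M t)"
proof -
  have "M \<in> Ev T X Y" "N \<in> Ev T Y X"
    using MN single_test_ev unfolding inverse_channels_def by auto
  then show ?thesis
    using pair_cmp[OF a _ cmp_ev[OF t]] cmp_inverse_channels[OF MN t] by simp
qed

lemma refinement_cmp_inverse_channels:
  assumes MN: "inverse_channels T X Y M N" and \<Phi>: "\<Phi> \<in> Ev T [] X"
    and Ts: "Ts \<in> Tests T [] Y" and S: "S \<subseteq> {..<length Ts}"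
    and refines: "\<forall>a\<in>Eff T Y. pair T a (cmp T M \<Phi>) = (\<Sum>j\<in>S. pair T a (Ts ! j))"
  shows "\<forall>a\<in>Eff T X. pair T a \<Phi> = (\<Sum>j\<in>S. pair T a (map (cmp T N) Ts ! j))"
proof
  fix a assume a: "a \<in> Eff T X"
  have N: "N \<in> Ev T Y X" using MN single_test_ev unfolding inverse_channels_def by auto
  have Ts_ev: "\<And>j. j \<in> S \<Longrightarrow> Ts ! j \<in> Ev T [] Y"
    using tests_ev[OF Ts] S by (meson lessThan_iff nth_mem subsetD)
  have "cmp T a N \<in> Eff T Y" using cmp_ev[OF N] a unfolding Eff_def by blast
  then have "pair T a \<Phi> = (\<Sum>j\<in>S. pair T (cmp T a N) (Ts ! j))"
    using pair_cmp_inverse_channels[OF MN _ \<Phi>] refines a unfolding Eff_def by simp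
  also have "\<dots> = (\<Sum>j\<in>S. pair T a (map (cmp T N) Ts ! j))"
    using pair_cmp[OF _ N Ts_ev] a S unfolding Eff_def by (intro sum.cong) auto
  finally show "pair T a \<Phi> = (\<Sum>j\<in>S. pair T a (map (cmp T N) Ts ! j))" .
qed

lemma pure_cmp_inverse_channels:
  assumes pure: "pure T X \<Phi>" and MN: "inverse_channels T X Y M N"
  shows "pure T Y (cmp T M \<Phi>)"
  unfolding pure_def
proof (intro conjI ballI allI impI)
  have M: "M \<in> Ev T X Y" and N: "[N] \<in> Tests T Y X" and NM: "inverse_channels T Y X N M"
    using MN single_test_ev unfolding inverse_channels_def by auto
  have \<Phi>: "\<Phi> \<in> Ev T [] X" using pure unfolding pure_def St_def by simp
  then show "cmp T M \<Phi> \<in> St T Y" using cmp_ev[OF _ M] unfolding St_def by blast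
  fix Ts S i
  assume Ts: "Ts \<in> Tests T [] Y" and S: "S \<subseteq> {..<length Ts}" and i: "i \<in> S"
    and refines: "\<forall>a\<in>Eff T Y. pair T a (cmp T M \<Phi>) = (\<Sum>j\<in>S. pair T a (Ts ! j))"
  have Ts_i: "Ts ! i \<in> Ev T [] Y"
    using tests_ev[OF Ts] S i by (meson lessThan_iff nth_mem subsetD)
  obtain c where c: "c \<ge> 0" "\<forall>a\<in>Eff T X. pair T a (map (cmp T N) Ts ! i) = c * pair T a \<Phi>"
    using pure channel_after_test[OF Ts N] S i refinement_cmp_inverse_channels[OF MN \<Phi> Ts S refines]
    unfolding pure_def by (metis length_map)
  have "pair T a (Ts ! i) = c * pair T a (cmp T M \<Phi>)" if a: "a \<in> Eff T Y" for a
  proof -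
    have "cmp T a M \<in> Eff T X" using cmp_ev[OF M] a unfolding Eff_def by blast
    moreover have "pair T a (Ts ! i) = pair T (cmp T a M) (map (cmp T N) Ts ! i)"
      using pair_cmp_inverse_channels[OF NM _ Ts_i] a S i unfolding Eff_def by auto
    ultimately show ?thesis using c(2) pair_cmp[OF _ M \<Phi>] a unfolding Eff_def by simp
  qed
  with c(1) show "\<exists>c\<ge>0. \<forall>a\<in>Eff T Y. pair T a (Ts ! i) = c * pair T a (cmp T M \<Phi>)" by blast
qed

lemma dilation_normalised:
  assumes dil: "(B, \<Phi>) \<in> dil T A \<rho>" and \<rho>: "\<rho> \<in> St1 T A"
  shows "cmp T (deteff T (A @ B)) \<Phi> = idt T []"
proof -
  have \<Phi>: "\<Phi> \<in> Ev T [] (A @ B)" and marg: "on_ancilla A (deteff T B) \<Phi> = \<rho>"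
    using dil unfolding dil_def St_def by auto
  have "cmp T (deteff T (A @ B)) \<Phi> = cmp T (deteff T A) \<rho>"
    unfolding deteff_append_cmp marg[symmetric]
    using cmp_assoc[OF \<Phi> on_ancilla_ev[OF deteff_ev] deteff_ev] by simp
  also have "\<dots> = idt T []"
    using \<rho> single_test_scalar cmp_single_test deteff_test unfolding St1_def by blast
  finally show ?thesis .
qed

lemma dil_trans:
  assumes \<Psi>: "(B, \<Psi>) \<in> dil T A \<rho>" and \<Phi>: "(C, \<Phi>) \<in> dil T (A @ B) \<Psi>"
  shows "(B @ C, \<Phi>) \<in> dil T A \<rho>"
proof -
  have \<Phi>_ev: "\<Phi> \<in> Ev T [] (A @ B @ C)"
    and marg_C: "on_ancilla A (tns T (idt T B) (deteff T C)) \<Phi> = \<Psi>"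
    using \<Phi> tns_idt_assoc[OF deteff_ev] unfolding dil_def St_def by auto
  have discard_C: "tns T (idt T B) (deteff T C) \<in> Ev T (B @ C) B"
    using tns_ev[OF idt_ev deteff_ev] by simp
  have "on_ancilla A (deteff T (B @ C)) \<Phi>
      = on_ancilla A (deteff T B) (on_ancilla A (tns T (idt T B) (deteff T C)) \<Phi>)"
    unfolding deteff_append_cmp on_ancilla_cmp[OF discard_C deteff_ev]
    using cmp_assoc[OF \<Phi>_ev on_ancilla_ev[OF discard_C] on_ancilla_ev[OF deteff_ev]] by simp
  then show ?thesis
    using \<Psi> \<Phi>_ev marg_C unfolding dil_def St_def by simp
qed

lemma ent_fid_dil_le:
  assumes \<Phi>: "(C, \<Phi>) \<in> dil T (A @ B) \<Psi>" and Ch: "Ch \<in> Ev T A A"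
  shows "ent_fid Ch A (B @ C) \<Phi> \<le> ent_fid Ch A B \<Psi>"
proof -
  have "\<Phi> \<in> St T (A @ B @ C)" and "on_ancilla A (tns T (idt T B) (deteff T C)) \<Phi> = \<Psi>"
    using \<Phi> tns_idt_assoc[OF deteff_ev] unfolding dil_def by auto
  then show ?thesis
    using ent_fid_on_ancilla_le[OF _ tns_single_test[OF idt_test deteff_test] Ch] by fastforce
qed

lemma tns_dil:
  assumes X: "X \<in> St T P" and Y: "Y \<in> Ev T [] Q" and norm: "cmp T (deteff T Q) Y = idt T []"
  shows "(Q, tns T X Y) \<in> dil T P X"
proof -
  have X_ev: "X \<in> Ev T [] P" using X unfolding St_def .
  have "on_ancilla P (deteff T Q) (tns T X Y) = X"
    using interchange[OF X_ev idt_ev Y deteff_ev] cmp_idt[OF X_ev] norm tns_unit[OF X_ev] by simp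
  then show ?thesis
    using tns_ev[OF X_ev Y] unfolding dil_def St_def by simp
qed

lemma purif_tns:
  assumes atomic: "atomic_par T" and \<Phi>: "(B, \<Phi>) \<in> purif T A \<rho>"
    and \<Xi>: "pure T Q \<Xi>" and norm: "cmp T (deteff T Q) \<Xi> = idt T []"
  shows "(B @ Q, tns T \<Phi> \<Xi>) \<in> purif T A \<rho>"
proof -
  have dil: "(B, \<Phi>) \<in> dil T A \<rho>" and pure: "pure T (A @ B) \<Phi>"
    using \<Phi> unfolding purif_def by auto
  have "\<Phi> \<in> St T (A @ B)" and "\<Xi> \<in> Ev T [] Q"
    using pure \<Xi> unfolding pure_def St_def by auto
  then have "(Q, tns T \<Phi> \<Xi>) \<in> dil T (A @ B) \<Phi>"
    using tns_dil norm by blast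
  then have "(B @ Q, tns T \<Phi> \<Xi>) \<in> dil T A \<rho>"
    using dil_trans[OF dil] by blast
  moreover have "pure T (A @ B @ Q) (tns T \<Phi> \<Xi>)"
    using atomic pure \<Xi> unfolding atomic_par_def by (metis append_assoc)
  ultimately show ?thesis unfolding purif_def by simp
qed

lemma purif_on_ancilla_inverse:
  assumes \<Phi>: "(X, \<Phi>) \<in> purif T A \<rho>" and MN: "inverse_channels T X Y M N"
  shows "(Y, on_ancilla A M \<Phi>) \<in> purif T A \<rho>"
proof -
  have M: "[M] \<in> Tests T X Y" using MN unfolding inverse_channels_def by simp
  have \<Phi>_ev: "\<Phi> \<in> Ev T [] (A @ X)" and marg: "on_ancilla A (deteff T X) \<Phi> = \<rho>"
    and pure: "pure T (A @ X) \<Phi>"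
    using \<Phi> unfolding purif_def dil_def St_def by auto
  have "cmp T (deteff T Y) M = deteff T X"
    using deteff_unique[OF cmp_single_test[OF M deteff_test]] by simp
  then have "on_ancilla A (deteff T Y) (on_ancilla A M \<Phi>) = \<rho>"
    using marg cmp_assoc[OF \<Phi>_ev on_ancilla_ev on_ancilla_ev[OF deteff_ev]]
      on_ancilla_cmp[OF single_test_ev[OF M] deteff_ev] single_test_ev[OF M] by simp
  moreover have "pure T (A @ Y) (on_ancilla A M \<Phi>)"
    using pure_cmp_inverse_channels[OF pure inverse_channels_on_ancilla[OF MN]] .
  ultimately show ?thesis
    using cmp_ev[OF \<Phi>_ev on_ancilla_ev[OF single_test_ev[OF M]]]
    unfolding purif_def dil_def St_def by simp
qed

lemma ent_fid_le_tns:
  assumes \<Phi>: "\<Phi> \<in> St T (A @ B)" and \<Xi>: "[\<Xi>] \<in> Tests T [] Q" and Ch: "Ch \<in> Ev T A A"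
  shows "ent_fid Ch A B \<Phi> \<le> ent_fid Ch A (B @ Q) (tns T \<Phi> \<Xi>)"
proof -
  have "tns T \<Phi> \<Xi> = on_ancilla A (tns T (idt T B) \<Xi>) \<Phi>"
    using on_ancilla_state[of \<Phi> "A @ B" \<Xi> Q] \<Phi> single_test_ev[OF \<Xi>]
      tns_idt_assoc[OF single_test_ev[OF \<Xi>]] unfolding St_def by simp
  moreover have "[tns T (idt T B) \<Xi>] \<in> Tests T B (B @ Q)"
    using tns_single_test[OF idt_test \<Xi>, of B] by simp
  ultimately show ?thesis using ent_fid_on_ancilla_le[OF \<Phi> _ Ch] by simp
qed

lemma ent_fid_tns_le:
  assumes \<Xi>: "\<Xi> \<in> St T (A @ D)" and \<Phi>: "\<Phi> \<in> St T Q" and norm: "cmp T (deteff T Q) \<Phi> = idt T []"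
    and Ch: "Ch \<in> Ev T A A"
  shows "ent_fid Ch A (D @ Q) (tns T \<Xi> \<Phi>) \<le> ent_fid Ch A D \<Xi>"
  using ent_fid_dil_le[OF tns_dil[OF \<Xi> _ norm] Ch] \<Phi> unfolding St_def by simp

lemma ent_fid_purif_same_ancilla:
  assumes unique: "ess_unique_purif T" and \<rho>: "\<rho> \<in> St T A" and Ch: "Ch \<in> Ev T A A"
    and \<Phi>: "(K, \<Phi>) \<in> purif T A \<rho>" and \<Psi>: "(K, \<Psi>) \<in> purif T A \<rho>"
  shows "ent_fid Ch A K \<Phi> = ent_fid Ch A K \<Psi>"
proof -
  obtain U where "reversible T K U" and \<Psi>_eq: "\<Psi> = on_ancilla A U \<Phi>"
    using unique \<rho> \<Phi> \<Psi> unfolding ess_unique_purif_def by blast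
  then obtain V where "inverse_channels T K K U V"
    using reversible_inverse_channels by blast
  moreover have "\<Phi> \<in> St T (A @ K)" using \<Phi> unfolding purif_def dil_def by blast
  ultimately show ?thesis using ent_fid_on_ancilla_inverse[OF _ _ Ch] \<Psi>_eq by simp
qed

lemma ent_fid_purif_le:
  assumes \<rho>: "\<rho> \<in> St1 T A" and Ch: "Ch \<in> Ev T A A"
    and unique: "ess_unique_purif T" and atomic: "atomic_par T"
    and \<Phi>: "(B, \<Phi>) \<in> purif T A \<rho>" and \<Xi>: "(D, \<Xi>) \<in> purif T A \<rho>"
  shows "ent_fid Ch A B \<Phi> \<le> ent_fid Ch A D \<Xi>"
proof -
  have \<Phi>_pure: "pure T (A @ B) \<Phi>" and \<Xi>_pure: "pure T (A @ D) \<Xi>"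
    and \<Phi>_dil: "(B, \<Phi>) \<in> dil T A \<rho>" and \<Xi>_dil: "(D, \<Xi>) \<in> dil T A \<rho>"
    using \<Phi> \<Xi> unfolding purif_def by auto
  have \<Phi>_st: "\<Phi> \<in> St T (A @ B)" and \<Xi>_st: "\<Xi> \<in> St T (A @ D)"
    using \<Phi>_dil \<Xi>_dil unfolding dil_def by auto
  have \<Phi>_norm: "cmp T (deteff T (A @ B)) \<Phi> = idt T []"
    and \<Xi>_norm: "cmp T (deteff T (A @ D)) \<Xi> = idt T []"
    using dilation_normalised \<Phi>_dil \<Xi>_dil \<rho> by auto
  have \<rho>_st: "\<rho> \<in> St T A" using \<rho> single_test_ev unfolding St1_def St_def by blast
  obtain P P' where P: "inverse_channels T (D @ A @ B) (B @ A @ D) P P'"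
    using inverse_channels_rotate by blast
  have \<Xi>\<Phi>: "(D @ A @ B, tns T \<Xi> \<Phi>) \<in> purif T A \<rho>"
    using purif_tns[OF atomic \<Xi> \<Phi>_pure \<Phi>_norm] .
  then have \<Xi>\<Phi>_st: "tns T \<Xi> \<Phi> \<in> St T (A @ D @ A @ B)"
    unfolding purif_def dil_def by blast
  have "ent_fid Ch A B \<Phi> \<le> ent_fid Ch A (B @ A @ D) (tns T \<Phi> \<Xi>)"
    using ent_fid_le_tns[OF \<Phi>_st normalised_state_single_test[OF \<Xi>_st \<Xi>_norm] Ch] .
  also have "\<dots> = ent_fid Ch A (B @ A @ D) (on_ancilla A P (tns T \<Xi> \<Phi>))"
    using ent_fid_purif_same_ancilla[OF unique \<rho>_st Ch purif_tns[OF atomic \<Phi> \<Xi>_pure \<Xi>_norm]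
        purif_on_ancilla_inverse[OF \<Xi>\<Phi> P]] by simp
  also have "\<dots> = ent_fid Ch A (D @ A @ B) (tns T \<Xi> \<Phi>)"
    using ent_fid_on_ancilla_inverse[OF P \<Xi>\<Phi>_st Ch] .
  also have "\<dots> \<le> ent_fid Ch A D \<Xi>"
    using ent_fid_tns_le[OF \<Xi>_st \<Phi>_st \<Phi>_norm Ch] .
  finally show ?thesis .
qed

lemma corr_fid_eq_INF_purif:
  assumes purifiable: "all_purifiable T" and \<rho>: "\<rho> \<in> St T A" and Ch: "Ch \<in> Ev T A A"
  shows "corr_fid T A \<rho> Ch = (INF (B, \<Phi>)\<in>purif T A \<rho>. ent_fid Ch A B \<Phi>)"
proof -
  let ?f = "\<lambda>(B, \<Phi>). ent_fid Ch A B \<Phi>"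
  have bdd: "\<And>S. bdd_below (?f ` S)" by (intro bdd_belowI2[of _ 0]) auto
  have ne: "purif T A \<rho> \<noteq> {}" using purifiable \<rho> unfolding all_purifiable_def by blast
  have sub: "purif T A \<rho> \<subseteq> dil T A \<rho>" unfolding purif_def by auto
  have "\<exists>y\<in>purif T A \<rho>. ?f y \<le> ?f x" if x: "x \<in> dil T A \<rho>" for x
  proof -
    obtain B \<Psi> where x_eq: "x = (B, \<Psi>)" by fastforce
    with x have "\<Psi> \<in> St T (A @ B)" unfolding dil_def by auto
    then obtain C \<Phi> where \<Phi>: "(C, \<Phi>) \<in> purif T (A @ B) \<Psi>"
      using purifiable unfolding all_purifiable_def by fast
    then have "(B @ C, \<Phi>) \<in> purif T A \<rho>"
      using dil_trans[of B \<Psi>] x x_eq unfolding purif_def by (simp add: append_assoc)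
    moreover have "ent_fid Ch A (B @ C) \<Phi> \<le> ent_fid Ch A B \<Psi>"
      using ent_fid_dil_le[OF _ Ch] \<Phi> unfolding purif_def by blast
    ultimately show ?thesis using x_eq by force
  qed
  then have "(INF y\<in>purif T A \<rho>. ?f y) \<le> (INF x\<in>dil T A \<rho>. ?f x)"
    using ne sub by (intro cINF_mono bdd) auto
  moreover have "(INF x\<in>dil T A \<rho>. ?f x) \<le> (INF y\<in>purif T A \<rho>. ?f y)"
    using ne sub by (intro cINF_superset_mono bdd) auto
  ultimately show ?thesis unfolding corr_fid_def by simp
qed

lemma corr_fid_eq_ent_fid_purif:
  assumes "all_purifiable T" and "ess_unique_purif T" and "atomic_par T"
    and \<rho>: "\<rho> \<in> St1 T A" and Ch: "Ch \<in> Ev T A A" and \<Phi>: "(B, \<Phi>) \<in> purif T A \<rho>"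
  shows "corr_fid T A \<rho> Ch = ent_fid Ch A B \<Phi>"
proof -
  have "\<rho> \<in> St T A" using \<rho> single_test_ev unfolding St1_def St_def by blast
  then have "corr_fid T A \<rho> Ch = (INF (D, \<Xi>)\<in>purif T A \<rho>. ent_fid Ch A D \<Xi>)"
    using corr_fid_eq_INF_purif assms(1) Ch by blast
  also have "\<dots> = (INF x\<in>purif T A \<rho>. ent_fid Ch A B \<Phi>)"
    using ent_fid_purif_le[OF \<rho> Ch assms(2,3) \<Phi>] ent_fid_purif_le[OF \<rho> Ch assms(2,3) _ \<Phi>]
    by (intro INF_cong) (auto intro: antisym)
  also have "\<dots> = ent_fid Ch A B \<Phi>"
    using \<Phi> by (intro cINF_const) auto
  finally show ?thesis .
qed

end

theorem mainTheorem12: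
  fixes T :: "('s, 'e) opt" and A :: "'s list" and \<rho> Ch :: 'e
  assumes "sc_opt T" and "\<rho> \<in> St1 T A" and "Ch \<in> Tr1 T A A"
  shows "(all_purifiable T \<longrightarrow>
            corr_fid T A \<rho> Ch =
              (INF (B, \<Phi>)\<in>purif T A \<rho>. (fid T (A @ B) \<Phi> (cmp T (tns T Ch (idt T B)) \<Phi>))\<^sup>2))
       \<and> (all_purifiable T \<and> ess_unique_purif T \<and> atomic_par T \<longrightarrow>
            (\<forall>(B, \<Phi>)\<in>purif T A \<rho>.
               corr_fid T A \<rho> Ch = (fid T (A @ B) \<Phi> (cmp T (tns T Ch (idt T B)) \<Phi>))\<^sup>2))"
proof -
  interpret sc_opt T by fact
  have Ch: "Ch \<in> Ev T A A" using assms(3) single_test_ev unfolding Tr1_def by blast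
  have "\<rho> \<in> St T A" using assms(2) single_test_ev unfolding St1_def St_def by blast
  then show ?thesis
    using corr_fid_eq_INF_purif[OF _ _ Ch] corr_fid_eq_ent_fid_purif[OF _ _ _ assms(2) Ch] by auto
qed

end
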